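(* Let $m\in\mathbb{N}$, $m\geq 2$, and let $T:[0,1)\to[0,1)$ be $T(x)=mx \bmod 1$. Let $A\subset[0,1)$ be a nowhere dense set with $T(A)\subset A$. Then for every $t\in(0,1)$ that has a universal $m$-adic expansion, we simultaneously have $$A-t\subset\mathbb{Q}^c,\qquad A+t\subset\mathbb{Q}^c,\qquad \frac{A}{t}\subset\mathbb{Q}^c.$$ Moreover, if $t\in(1,\infty)$ and $1/t$ has a universal $m$-adic expansion, then $tA\subset\mathbb{Q}^c$. In particular, for Lebesgue almost every $t\in(0,1)$ the inclusions $A-t\subset\mathbb{Q}^c$, $A+t\subset\mathbb{Q}^c$, $A/t\subset\mathbb{Q}^c$ hold.
   Context: An $m$-adic expansion of $t\in(0,1)$ is a sequence $(t_k)\in\{0,1,\dots,m-1\}^{\mathbb{N}}$ with $t=\sum_{k\geq1}t_k m^{-k}$. Such an expansion is universal if for every $k\geq1$ and every word $x_1\cdots x_k\in\{0,\dots,m-1\}^k$ there is $k_0\in\mathbb{N}$ with $t_{k_0+1}\cdots t_{k_0+k}=x_1\cdots x_k$; $t$ has a universal $m$-adic expansion if some $m$-adic expansion of it is universal. Notation: $A\pm t=\{x\pm t:x\in A\}$, $tA=\{tx:x\in A\setminus\{0\}\}$, $\frac{A}{t}=t^{-1}A=\{t^{-1}x:x\in A\setminus\{0\}\}$. $\mathbb{Q}^c$ denotes the set of irrational real numbers. *)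

theory Defs
  imports "HOL-Analysis.Analysis"
begin

text \<open>An m-adic expansion of t: a digit sequence d (digits d 1, d 2, ... ; d 0 unused)
  with digits in {0,..,m-1} and t = sum_{k>=1} d k / m^k.\<close>
definition madic_expansion :: "nat \<Rightarrow> (nat \<Rightarrow> nat) \<Rightarrow> real \<Rightarrow> bool" where
  "madic_expansion m d t \<longleftrightarrow>
     (\<forall>k\<ge>1. d k < m) \<and> (\<lambda>k. real (d (Suc k)) / real m ^ Suc k) sums t"

definition universal_expansion :: "nat \<Rightarrow> (nat \<Rightarrow> nat) \<Rightarrow> bool" where
  "universal_expansion m d \<longleftrightarrow>
     (\<forall>w :: nat list. length w \<ge> 1 \<longrightarrow> set w \<subseteq> {..<m} \<longrightarrow>
        (\<exists>k0. \<forall>i<length w. d (k0 + Suc i) = w ! i))"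

definition has_universal_expansion :: "nat \<Rightarrow> real \<Rightarrow> bool" where
  "has_universal_expansion m t \<longleftrightarrow>
     (\<exists>d. madic_expansion m d t \<and> universal_expansion m d)"

definition Tmap :: "nat \<Rightarrow> real \<Rightarrow> real" where
  "Tmap m x = frac (real m * x)"

definition nowhere_dense :: "real set \<Rightarrow> bool" where
  "nowhere_dense A \<longleftrightarrow> interior (closure A) = {}"

end

theory Submission
  imports Defs
begin

text \<open>If b x - a t were an integer for some x \<in> A and integers a \<noteq> 0, b > 0, then
  multiplying by m^k would make b T^k x - a t_k an integer, where t_k is the number whose
  expansion is the tail of that of t after k digits. As T^k x \<in> A \<subseteq> [0,1), every t_k would lie
  in one of finitely many affine preimages of the closure of A, whose union is closed and
  nowhere dense; but the tails of a universal expansion are dense in (0,1). The relations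
  x - t \<in> \<rat>, x + t \<in> \<rat> and x / t \<in> \<rat> are all of this form, and t A = A / (1/t).

  Almost every t has a universal canonical expansion: the set of t \<in> [0,1) whose canonical
  digits avoid a fixed word of length L is covered by m^L - 1 copies of itself scaled by
  m^-L, so it is a null set.\<close>

section \<open>Base-m words and tails of expansions\<close>

fun word_value :: "nat \<Rightarrow> nat list \<Rightarrow> nat" where
  "word_value m [] = 0"
| "word_value m (a # w) = a * m ^ length w + word_value m w"

lemma word_value_less:
  assumes "set w \<subseteq> {..<m}"
  shows "word_value m w < m ^ length w"
  using assms
proof (induction w)
  case Nil then show ?case by simp
next
  case (Cons a w)
  have "word_value m (a # w) < a * m ^ length w + m ^ length w" using Cons by auto
  also have "\<dots> = (a + 1) * m ^ length w" by simp
  also have "\<dots> \<le> m * m ^ length w" using Cons.prems by (intro mult_right_mono) auto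
  finally show ?case by simp
qed

lemma word_value_inj:
  assumes "length v = length w" "set v \<subseteq> {..<m}" "set w \<subseteq> {..<m}"
    and "word_value m v = word_value m w"
  shows "v = w"
  using assms
proof (induction v arbitrary: w)
  case Nil then show ?case by simp
next
  case (Cons a v)
  then obtain b w' where w: "w = b # w'" and len: "length v = length w'" by (cases w) auto
  have less: "word_value m v < m ^ length v" "word_value m w' < m ^ length v"
    using word_value_less[of v m] word_value_less[of w' m] Cons.prems w len by auto
  have eq: "a * m ^ length v + word_value m v = b * m ^ length v + word_value m w'"
    using Cons.prems(4) w len by simp
  have "a = (a * m ^ length v + word_value m v) div m ^ length v"
    using less by (metis add.commute add_cancel_right_right div_less div_mult_self1 less_nat_zero_code)
  also have "\<dots> = b" unfolding eq using less
    by (metis add.commute add_cancel_right_right div_less div_mult_self1 less_nat_zero_code)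
  finally have "a = b" .
  with eq Cons.IH[of w'] Cons.prems w len show ?case by simp
qed

lemma word_value_surj:
  assumes "m \<ge> 1" "c < m ^ L"
  shows "\<exists>w. length w = L \<and> set w \<subseteq> {..<m} \<and> word_value m w = c"
  using assms(2)
proof (induction L arbitrary: c)
  case 0 then show ?case by auto
next
  case (Suc L)
  obtain w where w: "length w = L" "set w \<subseteq> {..<m}" "word_value m w = c mod m ^ L"
    using Suc.IH[of "c mod m ^ L"] assms(1) by auto
  have "c div m ^ L < m" using Suc.prems
    by (intro less_mult_imp_div_less) (simp add: mult.commute)
  then show ?case using w div_mult_mod_eq[of c "m ^ L"]
    by (intro exI[of _ "(c div m ^ L) # w"]) auto
qed

lemma digit_sum_word_value:
  assumes "m \<ge> 1"
  shows "(\<Sum>i<length w. real (w ! i) / real m ^ Suc i) = real (word_value m w) / real m ^ length w"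
proof (induction w)
  case Nil then show ?case by simp
next
  case (Cons a w)
  have "(\<Sum>i<length (a # w). real ((a # w) ! i) / real m ^ Suc i)
        = real a / real m + (\<Sum>i<length w. real (w ! i) / real m ^ Suc i) / real m"
    unfolding length_Cons sum.lessThan_Suc_shift by (simp add: sum_divide_distrib mult_ac)
  also have "\<dots> = real (word_value m (a # w)) / real m ^ length (a # w)"
    using Cons assms by (simp add: field_simps)
  finally show ?case .
qed

lemma sums_max_digits:
  assumes "m \<ge> 2"
  shows "(\<lambda>i. (real m - 1) / real m ^ Suc i) sums 1"
proof -
  have "(\<lambda>i. (1 / real m) ^ i) sums (1 / (1 - 1 / real m))"
    using assms by (intro geometric_sums) simp
  from sums_mult[OF this, of "(real m - 1) / real m"]
  show ?thesis using assms by (simp add: field_simps power_divide)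
qed

definition expansion_tail :: "nat \<Rightarrow> (nat \<Rightarrow> nat) \<Rightarrow> nat \<Rightarrow> real" where
  "expansion_tail m d k = (\<Sum>i. real (d (k + Suc i)) / real m ^ Suc i)"

lemma digit_term_le:
  assumes "m \<ge> 2" "\<forall>k\<ge>1. d k < m"
  shows "real (d (k + Suc i)) / real m ^ Suc i \<le> (real m - 1) / real m ^ Suc i"
proof -
  have "d (k + Suc i) < m" using assms(2) by simp
  then show ?thesis using assms(1) by (intro divide_right_mono) auto
qed

lemma summable_expansion_tail:
  assumes "m \<ge> 2" "\<forall>k\<ge>1. d k < m"
  shows "summable (\<lambda>i. real (d (k + Suc i)) / real m ^ Suc i)"
  by (rule summable_comparison_test'[OF sums_summable[OF sums_max_digits[OF assms(1)]]])
    (use digit_term_le[OF assms] in simp)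

lemma expansion_tail_bounds:
  assumes "m \<ge> 2" "\<forall>k\<ge>1. d k < m"
  shows "0 \<le> expansion_tail m d k" "expansion_tail m d k \<le> 1"
proof -
  show "0 \<le> expansion_tail m d k" unfolding expansion_tail_def
    by (intro suminf_nonneg summable_expansion_tail assms) simp
  have "expansion_tail m d k \<le> (\<Sum>i. (real m - 1) / real m ^ Suc i)" unfolding expansion_tail_def
    using digit_term_le[OF assms] summable_expansion_tail[OF assms]
      sums_summable[OF sums_max_digits[OF assms(1)]]
    by (rule suminf_le)
  then show "expansion_tail m d k \<le> 1" using sums_max_digits[OF assms(1)] sums_unique by fastforce
qed

lemma expansion_tail_split:
  assumes "m \<ge> 2" "\<forall>k\<ge>1. d k < m"
  shows "expansion_tail m d k = (\<Sum>i<L. real (d (k + Suc i)) / real m ^ Suc i)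
           + expansion_tail m d (k + L) / real m ^ L"
proof -
  have "expansion_tail m d k = (\<Sum>n. real (d (k + Suc (n + L))) / real m ^ Suc (n + L))
          + (\<Sum>i<L. real (d (k + Suc i)) / real m ^ Suc i)"
    unfolding expansion_tail_def
    by (rule suminf_split_initial_segment[OF summable_expansion_tail[OF assms]])
  also have "(\<lambda>n. real (d (k + Suc (n + L))) / real m ^ Suc (n + L))
           = (\<lambda>n. real (d (k + L + Suc n)) / real m ^ Suc n / real m ^ L)"
    by (simp add: power_add field_simps)
  also have "(\<Sum>n. real (d (k + L + Suc n)) / real m ^ Suc n / real m ^ L)
           = expansion_tail m d (k + L) / real m ^ L"
    unfolding expansion_tail_def by (rule suminf_divide[OF summable_expansion_tail[OF assms]])
  finally show ?thesis by simp
qed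

lemma madic_expansion_tail_Ints:
  assumes "m \<ge> 2" "madic_expansion m d t"
  shows "real m ^ k * t - expansion_tail m d k \<in> \<int>"
proof -
  have digits: "\<forall>k\<ge>1. d k < m" and "(\<lambda>k. real (d (Suc k)) / real m ^ Suc k) sums t"
    using assms(2) unfolding madic_expansion_def by auto
  then have "t = expansion_tail m d 0" unfolding expansion_tail_def by (simp add: sums_iff)
  then have "t = (\<Sum>i<k. real (d (Suc i)) / real m ^ Suc i) + expansion_tail m d k / real m ^ k"
    using expansion_tail_split[OF assms(1) digits, of 0 k] by simp
  then have "real m ^ k * t - expansion_tail m d k
               = (\<Sum>i<k. real (d (Suc i)) * (real m ^ k / real m ^ Suc i))"
    using assms(1) by (simp add: field_simps sum_distrib_left)
  also have "\<dots> = (\<Sum>i<k. real (d (Suc i)) * real m ^ (k - Suc i))"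
    using assms(1) by (intro sum.cong refl) (simp add: power_diff)
  also have "\<dots> \<in> \<int>" by (intro Ints_sum) auto
  finally show ?thesis .
qed

lemma universal_expansion_tails_dense:
  assumes m: "m \<ge> 2" and exp: "madic_expansion m d t" and univ: "universal_expansion m d"
  shows "{0<..<1} \<subseteq> closure (range (expansion_tail m d))"
proof
  fix y :: real assume "y \<in> {0<..<1}"
  then have y: "0 < y" "y < 1" by auto
  have digits: "\<forall>k\<ge>1. d k < m" using exp unfolding madic_expansion_def by auto
  have mr: "real m > 1" using m by simp
  show "y \<in> closure (range (expansion_tail m d))"
    unfolding closure_approachable dist_real_def
  proof (intro allI impI)
    fix e :: real assume e: "e > 0"
    obtain n where "1 / e < real m ^ n" using real_arch_pow[OF mr] by blast
    moreover have "real m ^ n \<le> real m ^ Suc n" using mr by (intro power_increasing) auto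
    ultimately have "1 / e < real m ^ Suc n" by linarith
    then have small: "1 / real m ^ Suc n < e" using e mr by (simp add: field_simps)
    define L where "L = Suc n"
    define c where "c = nat \<lfloor>real m ^ L * y\<rfloor>"
    have mL: "real m ^ L > 0" using mr by simp
    have "\<lfloor>real m ^ L * y\<rfloor> \<ge> 0" using y mL by simp
    then have c_le: "real c \<le> real m ^ L * y" and c_gt: "real m ^ L * y < real c + 1"
      unfolding c_def by simp linarith
    have "real c < real m ^ L" using c_le y mL by (smt (verit) mult_less_cancel_left2)
    then have "c < m ^ L" by (metis of_nat_less_iff of_nat_power)
    then obtain w where w: "length w = L" "set w \<subseteq> {..<m}" "word_value m w = c"
      using word_value_surj[of m c L] m by auto
    obtain k where k: "\<forall>i<L. d (k + Suc i) = w ! i"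
      using univ w unfolding universal_expansion_def L_def by force
    have "(\<Sum>i<L. real (d (k + Suc i)) / real m ^ Suc i) = real c / real m ^ L"
      using digit_sum_word_value[of m w] k m w by simp
    then have tail: "expansion_tail m d k = (real c + expansion_tail m d (k + L)) / real m ^ L"
      using expansion_tail_split[OF m digits, of k L] by (simp add: add_divide_distrib)
    have "\<bar>real c + expansion_tail m d (k + L) - real m ^ L * y\<bar> \<le> 1"
      using c_le c_gt expansion_tail_bounds[OF m digits, of "k + L"] by linarith
    then have "\<bar>expansion_tail m d k - y\<bar> \<le> 1 / real m ^ L"
      using mL by (simp add: tail field_simps)
    then show "\<exists>x\<in>range (expansion_tail m d). \<bar>x - y\<bar> < e"
      using small unfolding L_def by (intro bexI[of _ "expansion_tail m d k"]) auto
  qed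
qed

section \<open>Irrationality via a Baire category argument\<close>

lemma nowhere_dense_affine_preimage:
  fixes C :: "real set"
  assumes "closed C" "interior C = {}" "a \<noteq> 0"
  shows "closed {x. a * x + b \<in> C}" "interior {x. a * x + b \<in> C} = {}"
proof -
  have "closed ((\<lambda>x. a * x + b) -` C)"
    by (intro continuous_closed_vimage assms continuous_intros)
  then show "closed {x. a * x + b \<in> C}" by (simp add: vimage_def)
  define V where "V = interior {x. a * x + b \<in> C}"
  have "open ((\<lambda>x. b + a *\<^sub>R x) ` V)" unfolding V_def by (rule open_affinity[OF open_interior assms(3)])
  moreover have "(\<lambda>x. b + a *\<^sub>R x) ` V \<subseteq> C"
    using interior_subset unfolding V_def by (fastforce simp: add.commute)
  ultimately have "(\<lambda>x. b + a *\<^sub>R x) ` V \<subseteq> interior C" by (rule interior_maximal[rotated])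
  then show "interior {x. a * x + b \<in> C} = {}" using assms(2) unfolding V_def by blast
qed

lemma closed_nowhere_dense_finite_UN:
  fixes P :: "'i \<Rightarrow> 'a::topological_space set"
  assumes "finite I" "\<And>i. i \<in> I \<Longrightarrow> closed (P i)" "\<And>i. i \<in> I \<Longrightarrow> interior (P i) = {}"
  shows "closed (\<Union>i\<in>I. P i) \<and> interior (\<Union>i\<in>I. P i) = {}"
  using assms
proof (induction I rule: finite_induct)
  case empty then show ?case by simp
next
  case (insert j J)
  then have "interior ((\<Union>i\<in>J. P i) \<union> P j) = interior (\<Union>i\<in>J. P i)"
    by (intro interior_closed_Un_empty_interior) auto
  moreover have "(\<Union>i\<in>insert j J. P i) = (\<Union>i\<in>J. P i) \<union> P j" by auto
  ultimately show ?case using insert by auto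
qed

lemma dense_sequence_escapes_affine_preimages:
  fixes A :: "real set" and s :: "nat \<Rightarrow> real"
  assumes "finite I" and nd: "nowhere_dense A" and "\<forall>i\<in>I. \<alpha> i \<noteq> 0"
    and dense: "{0<..<1} \<subseteq> closure (range s)"
  shows "\<exists>k. \<forall>i\<in>I. \<alpha> i * s k + \<beta> i \<notin> A"
proof (rule ccontr)
  define P where "P i = {x. \<alpha> i * x + \<beta> i \<in> closure A}" for i
  assume "\<nexists>k. \<forall>i\<in>I. \<alpha> i * s k + \<beta> i \<notin> A"
  then have "range s \<subseteq> (\<Union>i\<in>I. P i)"
    using closure_subset unfolding P_def by fastforce
  moreover have "closed (P i)" "interior (P i) = {}" if "i \<in> I" for i
    using nowhere_dense_affine_preimage[of "closure A" "\<alpha> i" "\<beta> i"] nd assms(3) that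
    unfolding nowhere_dense_def P_def by auto
  then have "closed (\<Union>i\<in>I. P i)" and empty: "interior (\<Union>i\<in>I. P i) = {}"
    using closed_nowhere_dense_finite_UN[OF assms(1)] by blast+
  ultimately have "closure (range s) \<subseteq> (\<Union>i\<in>I. P i)" by (intro closure_minimal)
  with dense have "{0<..<1::real} \<subseteq> interior (\<Union>i\<in>I. P i)"
    by (intro interior_maximal) auto
  moreover have "1 / 2 \<in> {0<..<1::real}" by simp
  ultimately show False using empty by blast
qed

lemma universal_tails_escape_integer_relations:
  fixes a b :: real
  assumes m: "m \<ge> 2" and exp: "madic_expansion m d t" and univ: "universal_expansion m d"
    and A: "A \<subseteq> {0..<1}" "nowhere_dense A" and a: "a \<noteq> 0" and b: "b > 0"
  shows "\<exists>k. \<forall>z\<in>A. b * z - a * expansion_tail m d k \<notin> \<int>"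
proof -
  \<comment> \<open>only integers p with |p| \<le> K can equal b z - a s for z \<in> [0,1) and s \<in> [0,1]\<close>
  define K where "K = \<lceil>b + \<bar>a\<bar>\<rceil>"
  have digits: "\<forall>k\<ge>1. d k < m" using exp unfolding madic_expansion_def by auto
  obtain k where k: "\<forall>p\<in>{-K..K}. a / b * expansion_tail m d k + real_of_int p / b \<notin> A"
    using dense_sequence_escapes_affine_preimages[of "{-K..K}" A "\<lambda>_. a / b"
        "expansion_tail m d" "\<lambda>p. real_of_int p / b"]
      universal_expansion_tails_dense[OF m exp univ] A(2) a b by auto
  have "b * z - a * expansion_tail m d k \<notin> \<int>" if z: "z \<in> A" for z
  proof
    assume "b * z - a * expansion_tail m d k \<in> \<int>"
    then obtain p where p: "b * z - a * expansion_tail m d k = real_of_int p"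
      by (auto elim: Ints_cases)
    have "\<bar>b * z\<bar> \<le> b" using z A b by (auto simp: abs_mult)
    moreover have "\<bar>a * expansion_tail m d k\<bar> \<le> \<bar>a\<bar>"
      using expansion_tail_bounds[OF m digits] by (simp add: abs_mult mult_left_le)
    ultimately have "p \<in> {-K..K}" using p unfolding K_def by auto linarith+
    moreover have "a / b * expansion_tail m d k + real_of_int p / b = z"
      using p b by (simp add: field_simps)
    ultimately show False using k z by auto
  qed
  then show ?thesis by blast
qed

lemma Tmap_iterate_Ints: "real m ^ k * x - (Tmap m ^^ k) x \<in> \<int>"
proof (induction k)
  case 0 then show ?case by simp
next
  case (Suc k)
  let ?y = "(Tmap m ^^ k) x"
  have "real m ^ Suc k * x - (Tmap m ^^ Suc k) x
          = real m * (real m ^ k * x - ?y) + (real m * ?y - Tmap m ?y)"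
    by (simp add: algebra_simps)
  also have "\<dots> \<in> \<int>" using Suc unfolding Tmap_def frac_def by (intro Ints_add Ints_mult) auto
  finally show ?case .
qed

lemma Tmap_iterate_mem:
  assumes "Tmap m ` A \<subseteq> A" "x \<in> A"
  shows "(Tmap m ^^ k) x \<in> A"
  using assms by (induction k) auto

lemma no_integer_relation_with_universal:
  fixes a b :: int
  assumes m: "m \<ge> 2" and A: "A \<subseteq> {0..<1}" "nowhere_dense A" "Tmap m ` A \<subseteq> A"
    and univ: "has_universal_expansion m t" and x: "x \<in> A" and "a \<noteq> 0" "b > 0"
  shows "real_of_int b * x - real_of_int a * t \<notin> \<int>"
proof
  assume rel: "real_of_int b * x - real_of_int a * t \<in> \<int>"
  obtain d where exp: "madic_expansion m d t" and "universal_expansion m d"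
    using univ unfolding has_universal_expansion_def by blast
  then obtain k where k: "\<forall>z\<in>A. b * z - a * expansion_tail m d k \<notin> \<int>"
    using universal_tails_escape_integer_relations[OF m exp _ A(1,2), of a b] assms by auto
  let ?z = "(Tmap m ^^ k) x"
  have "b * ?z - a * expansion_tail m d k
          = - (b * (real m ^ k * x - ?z)) + real m ^ k * (b * x - a * t)
            + a * (real m ^ k * t - expansion_tail m d k)"
    by (simp add: algebra_simps)
  also have "\<dots> \<in> \<int>"
    using Tmap_iterate_Ints madic_expansion_tail_Ints[OF m exp] rel
    by (intro Ints_add Ints_minus Ints_mult) auto
  finally show False using k Tmap_iterate_mem[OF A(3) x] by blast
qed

lemma universal_irrational_translates_and_quotients:
  assumes m: "m \<ge> 2" and A: "A \<subseteq> {0..<1}" "nowhere_dense A" "Tmap m ` A \<subseteq> A"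
    and t: "0 < t" and univ: "has_universal_expansion m t"
  shows "(\<forall>x\<in>A. x - t \<notin> \<rat>) \<and> (\<forall>x\<in>A. x + t \<notin> \<rat>) \<and> (\<forall>x\<in>A. x \<noteq> 0 \<longrightarrow> x / t \<notin> \<rat>)"
proof (intro conjI ballI impI notI)
  note no_rel = no_integer_relation_with_universal[OF m A univ]
  fix x assume x: "x \<in> A"
  {
    assume "x - t \<in> \<rat>"
    then obtain p q :: int where "q > 0" "x - t = p / q" by (elim Rats_cases')
    then have "q * x - q * t = p" by (simp add: field_simps)
    then show False using no_rel[OF x, of q q] \<open>q > 0\<close> by simp
  next
    assume "x + t \<in> \<rat>"
    then obtain p q :: int where "q > 0" "x + t = p / q" by (elim Rats_cases')
    then have "q * x - (- q) * t = p" by (simp add: field_simps)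
    then show False using no_rel[OF x, of "- q" q] \<open>q > 0\<close> by simp
  next
    assume "x \<noteq> 0" "x / t \<in> \<rat>"
    then obtain p q :: int where "q > 0" "x / t = p / q" by (elim Rats_cases')
    then have "q * x - p * t = 0" "p \<noteq> 0" using t \<open>x \<noteq> 0\<close> by (auto simp: field_simps)
    then show False using no_rel[OF x, of p q] \<open>q > 0\<close> by simp
  }
qed

section \<open>Canonical expansions\<close>

definition canonical_digit :: "nat \<Rightarrow> real \<Rightarrow> nat \<Rightarrow> nat" where
  "canonical_digit m t i = nat (\<lfloor>real m ^ i * t\<rfloor> mod int m)"

lemma floor_power_times_div:
  assumes "m \<ge> 1"
  shows "\<lfloor>real m ^ k * t\<rfloor> = \<lfloor>real m ^ (k + j) * t\<rfloor> div int m ^ j"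
proof -
  have "real m ^ k * t = real m ^ (k + j) * t / real_of_int (int m ^ j)"
    using assms by (simp add: power_add)
  then show ?thesis using floor_divide_real_eq_div[of "int m ^ j" "real m ^ (k + j) * t"] by simp
qed

lemma sum_canonical_digits:
  assumes m: "m \<ge> 2"
  shows "(\<Sum>k<n. real (canonical_digit m t (Suc k)) / real m ^ Suc k)
           = real_of_int \<lfloor>real m ^ n * t\<rfloor> / real m ^ n - real_of_int \<lfloor>t\<rfloor>"
proof (induction n)
  case 0 then show ?case by simp
next
  case (Suc n)
  define N where "N = \<lfloor>real m ^ Suc n * t\<rfloor>"
  have "\<lfloor>real m ^ n * t\<rfloor> = N div int m"
    unfolding N_def using floor_power_times_div[of m n t 1] m by simp
  moreover have "int (canonical_digit m t (Suc n)) = N mod int m"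
    unfolding canonical_digit_def N_def using m by simp
  ultimately have "real_of_int N = real m * real_of_int \<lfloor>real m ^ n * t\<rfloor> + real (canonical_digit m t (Suc n))"
    by (metis div_mult_mod_eq mult.commute of_int_add of_int_mult of_int_of_nat_eq)
  then have "real_of_int N / real m ^ Suc n = real_of_int \<lfloor>real m ^ n * t\<rfloor> / real m ^ n
               + real (canonical_digit m t (Suc n)) / real m ^ Suc n"
    using m by (simp add: field_simps)
  then show ?case using Suc unfolding N_def by simp
qed

lemma madic_expansion_canonical:
  assumes m: "m \<ge> 2" and t: "0 \<le> t" "t < 1"
  shows "madic_expansion m (canonical_digit m t) t"
  unfolding madic_expansion_def
proof
  show "\<forall>k\<ge>1. canonical_digit m t k < m"
    unfolding canonical_digit_def using m by (auto simp: nat_less_iff)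
  have mr: "real m > 1" using m by simp
  have lower: "t - 1 / real m ^ n \<le> real_of_int \<lfloor>real m ^ n * t\<rfloor> / real m ^ n" for n
  proof -
    have "real m ^ n * t - 1 \<le> real_of_int \<lfloor>real m ^ n * t\<rfloor>" by linarith
    then have "(real m ^ n * t - 1) / real m ^ n \<le> real_of_int \<lfloor>real m ^ n * t\<rfloor> / real m ^ n"
      using mr by (intro divide_right_mono) auto
    moreover have "(real m ^ n * t - 1) / real m ^ n = t - 1 / real m ^ n"
      using mr by (simp add: field_simps)
    ultimately show ?thesis by simp
  qed
  have upper: "real_of_int \<lfloor>real m ^ n * t\<rfloor> / real m ^ n \<le> t" for n
  proof -
    have "real_of_int \<lfloor>real m ^ n * t\<rfloor> \<le> real m ^ n * t" by linarith
    then show ?thesis using mr by (simp add: field_simps)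
  qed
  have "(\<lambda>n. real_of_int \<lfloor>real m ^ n * t\<rfloor> / real m ^ n) \<longlonglongrightarrow> t"
  proof (rule real_tendsto_sandwich)
    show "\<forall>\<^sub>F n in sequentially. t - 1 / real m ^ n \<le> real_of_int \<lfloor>real m ^ n * t\<rfloor> / real m ^ n"
      using lower by (intro always_eventually allI)
    show "\<forall>\<^sub>F n in sequentially. real_of_int \<lfloor>real m ^ n * t\<rfloor> / real m ^ n \<le> t"
      using upper by (intro always_eventually allI)
    have "(\<lambda>n. t - 1 / real m ^ n) \<longlonglongrightarrow> t - 0"
      by (intro tendsto_diff tendsto_const LIMSEQ_divide_realpow_zero mr)
    then show "(\<lambda>n. t - 1 / real m ^ n) \<longlonglongrightarrow> t" by simp
  qed simp
  moreover have "\<lfloor>t\<rfloor> = 0" using t by (simp add: floor_eq_iff)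
  ultimately show "(\<lambda>k. real (canonical_digit m t (Suc k)) / real m ^ Suc k) sums t"
    unfolding sums_def sum_canonical_digits[OF m] by simp
qed

definition digit_window :: "nat \<Rightarrow> nat \<Rightarrow> real \<Rightarrow> nat \<Rightarrow> nat" where
  "digit_window m L t k = nat (\<lfloor>real m ^ (k + L) * t\<rfloor> mod int m ^ L)"

lemma word_value_canonical_digits:
  assumes m: "m \<ge> 2" and t: "0 \<le> t"
  shows "word_value m (map (\<lambda>i. canonical_digit m t (k + Suc i)) [0..<L]) = digit_window m L t k"
proof (induction L arbitrary: k)
  case 0 then show ?case by (simp add: digit_window_def)
next
  case (Suc L)
  define N where "N = \<lfloor>real m ^ (k + Suc L) * t\<rfloor>"
  have N: "N \<ge> 0" unfolding N_def using t by simp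
  have "\<lfloor>real m ^ Suc k * t\<rfloor> = N div int m ^ L"
    unfolding N_def using floor_power_times_div[of m "Suc k" t L] m by simp
  moreover have "map (\<lambda>i. canonical_digit m t (k + Suc i)) [0..<Suc L]
      = canonical_digit m t (Suc k) # map (\<lambda>i. canonical_digit m t (Suc k + Suc i)) [0..<L]"
    unfolding map_upt_Suc by simp
  ultimately have "int (word_value m (map (\<lambda>i. canonical_digit m t (k + Suc i)) [0..<Suc L]))
      = (N div int m ^ L) mod int m * int m ^ L + N mod int m ^ L"
    using Suc.IH[of "Suc k"] N m unfolding N_def digit_window_def canonical_digit_def
    by (simp add: of_nat_mult)
  also have "\<dots> = N mod int m ^ Suc L"
    using zmod_zmult2_eq[of "int m" N "int m ^ L"] m by (simp add: algebra_simps)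
  finally show ?case unfolding digit_window_def N_def by (metis nat_int)
qed

lemma digit_window_shift:
  "digit_window m L (real m ^ L * t - real c) k = digit_window m L t (k + L)"
proof -
  have "real m ^ (k + L) * (real m ^ L * t - real c)
          = real m ^ (k + L + L) * t - real_of_int (int c * int m ^ (k + L))"
    by (simp add: algebra_simps power_add)
  then have "\<lfloor>real m ^ (k + L) * (real m ^ L * t - real c)\<rfloor>
               = \<lfloor>real m ^ (k + L + L) * t\<rfloor> - int c * int m ^ (k + L)"
    by (metis floor_diff_of_int)
  moreover have "int m ^ L dvd int c * int m ^ (k + L)" by (simp add: power_add)
  then have "(\<lfloor>real m ^ (k + L + L) * t\<rfloor> - int c * int m ^ (k + L)) mod int m ^ L
               = \<lfloor>real m ^ (k + L + L) * t\<rfloor> mod int m ^ L"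
    by (metis dvd_imp_mod_0 mod_diff_right_eq diff_zero)
  ultimately show ?thesis unfolding digit_window_def by (simp add: add.assoc)
qed

section \<open>Almost every number has a universal expansion\<close>

lemma emeasure_affine_preimage:
  fixes S :: "real set"
  assumes S: "S \<in> sets borel" and c: "c \<noteq> 0"
  shows "emeasure lborel S = ennreal \<bar>c\<bar> * emeasure lborel {x. b + c * x \<in> S}"
proof -
  have "emeasure lborel S = emeasure (density (distr lborel borel (\<lambda>x. b + c * x)) (\<lambda>_. ennreal \<bar>c\<bar>)) S"
    using lborel_real_affine[OF c, of b] by simp
  also have "\<dots> = (\<integral>\<^sup>+ x. ennreal \<bar>c\<bar> * indicator S x \<partial>(distr lborel borel (\<lambda>x. b + c * x)))"
    using S by (intro emeasure_density) auto
  also have "\<dots> = ennreal \<bar>c\<bar> * emeasure (distr lborel borel (\<lambda>x. b + c * x)) S"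
    using S by (intro nn_integral_cmult_indicator) auto
  also have "emeasure (distr lborel borel (\<lambda>x. b + c * x)) S = emeasure lborel {x. b + c * x \<in> S}"
    using S by (subst emeasure_distr) (auto simp: vimage_def)
  finally show ?thesis .
qed

lemma null_sets_if_covered_by_scaled_copies:
  fixes N :: "real set" and M :: real
  assumes N: "N \<in> sets borel" "emeasure lborel N \<noteq> \<infinity>"
    and C: "finite C" "real (card C) < M"
    and cover: "N \<subseteq> (\<Union>c\<in>C. {x. b c + M * x \<in> N})"
  shows "N \<in> null_sets lborel"
proof -
  define P where "P c = {x. b c + M * x \<in> N}" for c
  have M: "M > 0" using C(2) by (smt (verit) of_nat_0_le_iff)
  have P_sets: "P c \<in> sets borel" for c unfolding P_def using N(1) by measurable
  have P_measure: "emeasure lborel N = ennreal M * emeasure lborel (P c)" for c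
    unfolding P_def using emeasure_affine_preimage[OF N(1), of M "b c"] M by simp
  have P_fin: "P c \<in> fmeasurable lborel" for c
  proof -
    have "emeasure lborel (P c) \<noteq> \<infinity>"
      using N(2) P_measure[of c] M by (auto simp: ennreal_mult_eq_top_iff)
    then show ?thesis using P_sets by (simp add: fmeasurable_def less_top)
  qed
  have P_measure': "measure lborel (P c) = measure lborel N / M" for c
  proof -
    have "measure lborel N = M * measure lborel (P c)"
      unfolding measure_def P_measure[of c] using M by (simp add: enn2real_mult)
    then show ?thesis using M by (simp add: field_simps)
  qed
  have "measure lborel N \<le> measure lborel (\<Union>c\<in>C. P c)"
    using cover N(1) C(1) P_fin unfolding P_def
    by (intro measure_mono_fmeasurable fmeasurable.finite_UN) auto
  also have "\<dots> \<le> (\<Sum>c\<in>C. measure lborel (P c))"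
    using C(1) P_sets by (intro measure_UNION_le) auto
  also have "\<dots> = real (card C) * measure lborel N / M" unfolding P_measure' by simp
  finally have "measure lborel N * (M - real (card C)) \<le> 0"
    using M by (simp add: field_simps)
  then have "measure lborel N = 0"
    using C(2) measure_nonneg[of lborel N] by (smt (verit) mult_pos_pos)
  then show ?thesis
    using N by (simp add: null_sets_def emeasure_eq_ennreal_measure)
qed

definition word_avoiding_set :: "nat \<Rightarrow> nat \<Rightarrow> nat \<Rightarrow> real set" where
  "word_avoiding_set m L c = {t. 0 \<le> t \<and> t < 1 \<and> (\<forall>k. digit_window m L t k \<noteq> c)}"

lemma word_avoiding_set_sets: "word_avoiding_set m L c \<in> sets borel"
proof -
  have "word_avoiding_set m L c
          = {0..<1} \<inter> (\<Inter>k. {t::real. nat (\<lfloor>real m ^ (k + L) * t\<rfloor> mod int m ^ L) \<noteq> c})"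
    unfolding word_avoiding_set_def digit_window_def by auto
  also have "\<dots> \<in> sets borel" by measurable
  finally show ?thesis .
qed

text \<open>Shifting away the first L digits of t keeps t in the set, and those first L digits
  are not the avoided word.\<close>
lemma word_avoiding_set_self_cover:
  assumes m: "m \<ge> 2" and t: "t \<in> word_avoiding_set m L c"
  shows "\<exists>c'\<in>{..<m ^ L} - {c}. - real c' + real (m ^ L) * t \<in> word_avoiding_set m L c"
proof -
  have t01: "0 \<le> t" "t < 1" and avoid: "\<forall>k. digit_window m L t k \<noteq> c"
    using t unfolding word_avoiding_set_def by auto
  define c' where "c' = nat \<lfloor>real m ^ L * t\<rfloor>"
  have pos: "real m ^ L > 0" using m by simp
  have floor_pos: "\<lfloor>real m ^ L * t\<rfloor> \<ge> 0" using t01 pos by simp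
  have "real m ^ L * t < real m ^ L" using t01 pos by simp
  then have floor_less: "\<lfloor>real m ^ L * t\<rfloor> < int m ^ L" by (simp add: floor_less_iff)
  then have "c' < m ^ L" unfolding c'_def using floor_pos by (simp add: nat_less_iff)
  moreover have "c' = digit_window m L t 0"
    unfolding c'_def digit_window_def using floor_pos floor_less by simp
  then have "c' \<noteq> c" using avoid by metis
  moreover have "0 \<le> real m ^ L * t - real c'" "real m ^ L * t - real c' < 1"
    unfolding c'_def using floor_pos by linarith+
  moreover have "\<forall>k. digit_window m L (real m ^ L * t - real c') k \<noteq> c"
    using avoid by (simp add: digit_window_shift)
  ultimately show ?thesis unfolding word_avoiding_set_def by (intro bexI[of _ c']) auto
qed

lemma word_avoiding_set_null:
  assumes m: "m \<ge> 2" and c: "c < m ^ L"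
  shows "word_avoiding_set m L c \<in> null_sets lborel"
proof (rule null_sets_if_covered_by_scaled_copies)
  show "word_avoiding_set m L c \<in> sets borel" by (rule word_avoiding_set_sets)
  have "emeasure lborel (word_avoiding_set m L c) \<le> emeasure lborel {0..1::real}"
    by (intro emeasure_mono) (auto simp: word_avoiding_set_def)
  then show "emeasure lborel (word_avoiding_set m L c) \<noteq> \<infinity>" by (auto simp: top_unique)
  show "finite ({..<m ^ L} - {c})" by simp
  have "card ({..<m ^ L} - {c}) < m ^ L" using c by (simp add: card_Diff_singleton)
  then show "real (card ({..<m ^ L} - {c})) < real (m ^ L)" by linarith
  show "word_avoiding_set m L c \<subseteq> (\<Union>c'\<in>{..<m ^ L} - {c}. {x. - real c' + real (m ^ L) * x \<in> word_avoiding_set m L c})"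
    using word_avoiding_set_self_cover[OF m] by blast
qed

lemma non_universal_canonical_avoids_word:
  assumes m: "m \<ge> 2" and t: "0 \<le> t" "t < 1"
    and not_univ: "\<not> universal_expansion m (canonical_digit m t)"
  shows "\<exists>L c. c < m ^ L \<and> t \<in> word_avoiding_set m L c"
proof -
  obtain w where w: "set w \<subseteq> {..<m}"
    and missing: "\<forall>k. \<not> (\<forall>i<length w. canonical_digit m t (k + Suc i) = w ! i)"
    using not_univ unfolding universal_expansion_def by blast
  have "digit_window m (length w) t k \<noteq> word_value m w" for k
  proof
    assume window: "digit_window m (length w) t k = word_value m w"
    let ?v = "map (\<lambda>i. canonical_digit m t (k + Suc i)) [0..<length w]"
    have "set ?v \<subseteq> {..<m}" unfolding canonical_digit_def using m by (auto simp: nat_less_iff)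
    then have "?v = w"
      using word_value_inj[of ?v w m] word_value_canonical_digits[OF m t(1)] window w by simp
    then have "\<forall>i<length w. canonical_digit m t (k + Suc i) = w ! i"
      by (metis add_0 diff_zero length_map length_upt nth_map nth_upt)
    with missing show False by blast
  qed
  then show ?thesis using word_value_less[OF w] t unfolding word_avoiding_set_def by blast
qed

lemma AE_has_universal_expansion:
  assumes m: "m \<ge> 2"
  shows "AE t in lborel. t \<in> {0<..<1} \<longrightarrow> has_universal_expansion m t"
proof (rule AE_I')
  let ?J = "{(L, c). c < m ^ L}"
  have "countable ?J" by (rule countable_subset[OF subset_UNIV]) simp
  then show "(\<Union>(L, c)\<in>?J. word_avoiding_set m L c) \<in> null_sets lborel"
    using word_avoiding_set_null[OF m] by (intro null_sets_UN') auto
  show "{t \<in> space lborel. \<not> (t \<in> {0<..<1} \<longrightarrow> has_universal_expansion m t)}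
          \<subseteq> (\<Union>(L, c)\<in>?J. word_avoiding_set m L c)"
  proof
    fix t assume "t \<in> {t \<in> space lborel. \<not> (t \<in> {0<..<1} \<longrightarrow> has_universal_expansion m t)}"
    then have t: "0 \<le> t" "t < 1" and "\<not> has_universal_expansion m t" by auto
    then have "\<not> universal_expansion m (canonical_digit m t)"
      using madic_expansion_canonical[OF m t] unfolding has_universal_expansion_def by blast
    then show "t \<in> (\<Union>(L, c)\<in>?J. word_avoiding_set m L c)"
      using non_universal_canonical_avoids_word[OF m t] by blast
  qed
qed

theorem theorem1:
  fixes m :: nat and A :: "real set"
  assumes "m \<ge> 2"
    and "A \<subseteq> {0..<1}"
    and "nowhere_dense A"
    and "Tmap m ` A \<subseteq> A"
  shows "(\<forall>t\<in>{0<..<1}. has_universal_expansion m t \<longrightarrow>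
            (\<forall>x\<in>A. x - t \<notin> \<rat>) \<and> (\<forall>x\<in>A. x + t \<notin> \<rat>) \<and>
            (\<forall>x\<in>A. x \<noteq> 0 \<longrightarrow> x / t \<notin> \<rat>))
       \<and> (\<forall>t\<in>{1<..}. has_universal_expansion m (1 / t) \<longrightarrow>
            (\<forall>x\<in>A. x \<noteq> 0 \<longrightarrow> t * x \<notin> \<rat>))
       \<and> (AE t in lborel. t \<in> {0<..<1} \<longrightarrow>
            (\<forall>x\<in>A. x - t \<notin> \<rat>) \<and> (\<forall>x\<in>A. x + t \<notin> \<rat>) \<and>
            (\<forall>x\<in>A. x \<noteq> 0 \<longrightarrow> x / t \<notin> \<rat>))"
proof (intro conjI)
  note irrational = universal_irrational_translates_and_quotients[OF assms]
  show "\<forall>t\<in>{0<..<1}. has_universal_expansion m t \<longrightarrow>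
          (\<forall>x\<in>A. x - t \<notin> \<rat>) \<and> (\<forall>x\<in>A. x + t \<notin> \<rat>) \<and> (\<forall>x\<in>A. x \<noteq> 0 \<longrightarrow> x / t \<notin> \<rat>)"
    using irrational by auto
  show "\<forall>t\<in>{1<..}. has_universal_expansion m (1 / t) \<longrightarrow> (\<forall>x\<in>A. x \<noteq> 0 \<longrightarrow> t * x \<notin> \<rat>)"
    using irrational[of "1 / t" for t] by (auto simp: mult.commute)
  show "AE t in lborel. t \<in> {0<..<1} \<longrightarrow>
          (\<forall>x\<in>A. x - t \<notin> \<rat>) \<and> (\<forall>x\<in>A. x + t \<notin> \<rat>) \<and> (\<forall>x\<in>A. x \<noteq> 0 \<longrightarrow> x / t \<notin> \<rat>)"
    using AE_has_universal_expansion[OF assms(1)] by eventually_elim (use irrational in auto)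
qed

end
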